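(* For every integer $\mathcal A\ge 1$ and all widths $w_i\ge 1$ ($i=1,\dots,\mathcal A$), both $\mathcal F^{\text{poly}}_{\mathcal A}$ and $\mathcal F^{\text{DNN}}_{\mathcal A,\bm w}$ are closed under the fix-and-shift transformation: for every $f$ in the class and every $c\in\mathbb R$, the function $f_c(\bm x,z):=f(\bm x,c)+c-z$ (for $(\bm x,z)\in\mathbb R^p\times\mathbb R$) also belongs to the class.
   Context: The $\mathcal A$-th order polynomial space is $\mathcal F^{\text{poly}}_{\mathcal A}=\{f:\mathbb R^p\times\mathbb R\to\mathbb R\mid f(\bm x,z)=\sum_{0\le i_1+\dots+i_p+j\le\mathcal A}\alpha_{i_1,\dots,i_p,j}\,z^j\prod_{k=1}^p x_k^{i_k},\ \alpha_{i_1,\dots,i_p,j}\in\mathbb R\}$. The linear-augmented DNN space of depth $\mathcal A$ with widths $w_0=p+1,w_1,\dots,w_{\mathcal A},w_{\mathcal A+1}=1$ is $\mathcal F^{\text{DNN}}_{\mathcal A,\bm w}=\{f\mid f(\bm x,z)=l^{\text{aug}}((\bm x;z))+l_{\mathcal A}\circ\sigma\circ l_{\mathcal A-1}\circ\cdots\circ\sigma\circ l_0((\bm x;z))\}$, where $(\bm x;z)\in\mathbb R^{p+1}$ is the concatenated input, $l^{\text{aug}}(\bm u)=\bm W^{\text{aug}\top}\bm u$ with $\bm W^{\text{aug}}\in\mathbb R^{w_0}$ arbitrary, $l_i(\bm u)=\bm W_i\bm u+\bm b_i$ with arbitrary $\bm W_i\in\mathbb R^{w_{i+1}\times w_i}$,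 $\bm b_i\in\mathbb R^{w_{i+1}}$ for $i=0,\dots,\mathcal A$, and $\sigma$ is a fixed activation function applied coordinatewise (e.g., ReLU). *)

theory Defs
  imports Complex_Main
begin

text \<open>Vectors in R^p are represented as functions nat => real, where only the
coordinates 0..p-1 are meaningful. A function on R^p x R is a
function (nat => real) => real => real.\<close>

definition multi_indices :: "nat \<Rightarrow> nat \<Rightarrow> ((nat \<Rightarrow> nat) \<times> nat) set" where
  "multi_indices p A = {(i, j). (\<forall>k\<ge>p. i k = 0) \<and> (\<Sum>k<p. i k) + j \<le> A}"

definition poly_space :: "nat \<Rightarrow> nat \<Rightarrow> ((nat \<Rightarrow> real) \<Rightarrow> real \<Rightarrow> real) set" where
  "poly_space p A = {f. \<exists>\<alpha> :: (nat \<Rightarrow> nat) \<times> nat \<Rightarrow> real.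
      \<forall>x z. f x z = (\<Sum>(i, j)\<in>multi_indices p A. \<alpha> (i, j) * z ^ j * (\<Prod>k<p. x k ^ i k))}"

definition concat_input :: "nat \<Rightarrow> (nat \<Rightarrow> real) \<Rightarrow> real \<Rightarrow> (nat \<Rightarrow> real)" where
  "concat_input p x z = (\<lambda>k. if k < p then x k else if k = p then z else 0)"

definition affine_map :: "(nat \<Rightarrow> nat \<Rightarrow> real) \<Rightarrow> (nat \<Rightarrow> real) \<Rightarrow> nat \<Rightarrow> nat
    \<Rightarrow> (nat \<Rightarrow> real) \<Rightarrow> (nat \<Rightarrow> real)" where
  "affine_map W b m n u = (\<lambda>i. if i < m then (\<Sum>j<n. W i j * u j) + b i else 0)"

definition dnn_width :: "nat \<Rightarrow> nat \<Rightarrow> (nat \<Rightarrow> nat) \<Rightarrow> nat \<Rightarrow> nat" where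
  "dnn_width p A w i = (if i = 0 then p + 1 else if i = A + 1 then 1 else w i)"

fun dnn_forward :: "(real \<Rightarrow> real) \<Rightarrow> (nat \<Rightarrow> nat) \<Rightarrow> (nat \<Rightarrow> nat \<Rightarrow> nat \<Rightarrow> real)
    \<Rightarrow> (nat \<Rightarrow> nat \<Rightarrow> real) \<Rightarrow> nat \<Rightarrow> (nat \<Rightarrow> real) \<Rightarrow> (nat \<Rightarrow> real)" where
  "dnn_forward \<sigma> wd Ws bs 0 u = affine_map (Ws 0) (bs 0) (wd 1) (wd 0) u"
| "dnn_forward \<sigma> wd Ws bs (Suc k) u =
     affine_map (Ws (Suc k)) (bs (Suc k)) (wd (Suc (Suc k))) (wd (Suc k))
       (\<lambda>i. \<sigma> (dnn_forward \<sigma> wd Ws bs k u i))"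

definition dnn_space :: "(real \<Rightarrow> real) \<Rightarrow> nat \<Rightarrow> nat \<Rightarrow> (nat \<Rightarrow> nat)
    \<Rightarrow> ((nat \<Rightarrow> real) \<Rightarrow> real \<Rightarrow> real) set" where
  "dnn_space \<sigma> p A w = {f. \<exists>(Waug :: nat \<Rightarrow> real) (Ws :: nat \<Rightarrow> nat \<Rightarrow> nat \<Rightarrow> real)
      (bs :: nat \<Rightarrow> nat \<Rightarrow> real).
      \<forall>x z. f x z = (\<Sum>k<p + 1. Waug k * concat_input p x z k)
        + dnn_forward \<sigma> (dnn_width p A w) Ws bs A (concat_input p x z) 0}"

definition fix_shift :: "((nat \<Rightarrow> real) \<Rightarrow> real \<Rightarrow> real) \<Rightarrow> real \<Rightarrow> ((nat \<Rightarrow> real) \<Rightarrow> real \<Rightarrow> real)" where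
  "fix_shift f c = (\<lambda>x z. f x c + c - z)"

end

theory Submission
  imports Defs
begin

text \<open>For polynomials, substituting \<open>z := c\<close> turns each monomial \<open>z\<^sup>j x\<^sup>i\<close> into
\<open>c\<^sup>j x\<^sup>i\<close>, a multiple of a monomial of no larger degree, and \<open>c - z\<close> has degree
\<open>1 \<le> A\<close>. For networks, the now constant input \<open>z = c\<close> of the first layer is folded into
its bias, the linear augmentation takes coefficient \<open>-1\<close> on \<open>z\<close>, and the remaining
constant is added to the bias of the output layer; \<open>A \<ge> 1\<close> keeps the first and the
output layer distinct.\<close>

lemma finite_multi_indices: "finite (multi_indices p A)"
proof -
  let ?I = "{i. \<forall>k. (k \<in> {..<p} \<longrightarrow> i k \<in> {..A}) \<and> (k \<notin> {..<p} \<longrightarrow> i k = 0)}"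
  have bound: "i k \<le> A" if "(i, j) \<in> multi_indices p A" for i j k
  proof (cases "k < p")
    case True
    then have "i k \<le> (\<Sum>k<p. i k)"
      by (intro member_le_sum) auto
    with that show ?thesis
      unfolding multi_indices_def by simp
  next
    case False
    with that show ?thesis
      unfolding multi_indices_def by simp
  qed
  have "multi_indices p A \<subseteq> ?I \<times> {..A}"
  proof clarify
    fix i j assume ij: "(i, j) \<in> multi_indices p A"
    with bound[OF ij] show "i \<in> ?I \<and> j \<in> {..A}"
      unfolding multi_indices_def by auto
  qed
  moreover have "finite (?I \<times> {..A})"
    by (intro finite_cartesian_product finite_set_of_finite_funs finite_lessThan finite_atMost)
  ultimately show ?thesis
    by (rule finite_subset)
qed

lemma multi_indices_drop_z: "(i, j) \<in> multi_indices p A \<Longrightarrow> (i, 0) \<in> multi_indices p A"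
  unfolding multi_indices_def by auto

lemma poly_space_zero: "(\<lambda>x z. 0) \<in> poly_space p A"
  unfolding poly_space_def by (intro CollectI exI[of _ "\<lambda>_. 0"]) simp

lemma poly_space_add:
  assumes "f \<in> poly_space p A" "g \<in> poly_space p A"
  shows "(\<lambda>x z. f x z + g x z) \<in> poly_space p A"
proof -
  obtain a b where
    "\<forall>x z. f x z = (\<Sum>(i, j)\<in>multi_indices p A. a (i, j) * z ^ j * (\<Prod>k<p. x k ^ i k))"
    "\<forall>x z. g x z = (\<Sum>(i, j)\<in>multi_indices p A. b (i, j) * z ^ j * (\<Prod>k<p. x k ^ i k))"
    using assms unfolding poly_space_def by auto
  then show ?thesis
    unfolding poly_space_def
    by (intro CollectI exI[of _ "\<lambda>ij. a ij + b ij"])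
      (simp add: sum.distrib[symmetric] case_prod_beta algebra_simps)
qed

lemma poly_space_cmult:
  assumes "f \<in> poly_space p A"
  shows "(\<lambda>x z. r * f x z) \<in> poly_space p A"
proof -
  obtain a where
    "\<forall>x z. f x z = (\<Sum>(i, j)\<in>multi_indices p A. a (i, j) * z ^ j * (\<Prod>k<p. x k ^ i k))"
    using assms unfolding poly_space_def by auto
  then show ?thesis
    unfolding poly_space_def
    by (intro CollectI exI[of _ "\<lambda>ij. r * a ij"])
      (simp add: sum_distrib_left case_prod_beta algebra_simps)
qed

lemma poly_space_sum:
  "finite S \<Longrightarrow> (\<And>s. s \<in> S \<Longrightarrow> F s \<in> poly_space p A)
    \<Longrightarrow> (\<lambda>x z. \<Sum>s\<in>S. F s x z) \<in> poly_space p A"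
  by (induction S rule: finite_induct) (auto intro: poly_space_zero poly_space_add)

lemma poly_space_monomial:
  assumes "(i, j) \<in> multi_indices p A"
  shows "(\<lambda>x z. z ^ j * (\<Prod>k<p. x k ^ i k)) \<in> poly_space p A"
  unfolding poly_space_def
proof (intro CollectI exI[of _ "\<lambda>ij. if ij = (i, j) then 1 else 0"] allI)
  fix x :: "nat \<Rightarrow> real" and z :: real
  have "(\<Sum>(i', j')\<in>multi_indices p A.
          (if (i', j') = (i, j) then 1 else 0) * z ^ j' * (\<Prod>k<p. x k ^ i' k))
      = (\<Sum>ij\<in>multi_indices p A. if ij = (i, j) then z ^ j * (\<Prod>k<p. x k ^ i k) else 0)"
    by (intro sum.cong refl) (auto split: prod.split)
  then show "z ^ j * (\<Prod>k<p. x k ^ i k) = (\<Sum>(i', j')\<in>multi_indices p A.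
      (if (i', j') = (i, j) then 1 else 0) * z ^ j' * (\<Prod>k<p. x k ^ i' k))"
    using assms finite_multi_indices by (simp add: sum.delta')
qed

lemma poly_space_fix_z:
  assumes "f \<in> poly_space p A"
  shows "(\<lambda>x z. f x c) \<in> poly_space p A"
proof -
  obtain a where a:
    "\<forall>x z. f x z = (\<Sum>(i, j)\<in>multi_indices p A. a (i, j) * z ^ j * (\<Prod>k<p. x k ^ i k))"
    using assms unfolding poly_space_def by auto
  have "(\<lambda>x z. \<Sum>(i, j)\<in>multi_indices p A. a (i, j) * c ^ j * (\<Prod>k<p. x k ^ i k))
      \<in> poly_space p A"
  proof (rule poly_space_sum[OF finite_multi_indices], clarsimp)
    fix i j assume "(i, j) \<in> multi_indices p A"
    from poly_space_monomial[OF multi_indices_drop_z[OF this]]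
    show "(\<lambda>x z. a (i, j) * c ^ j * (\<Prod>k<p. x k ^ i k)) \<in> poly_space p A"
      by (intro poly_space_cmult) simp
  qed
  then show ?thesis
    using a by simp
qed

lemma poly_space_affine_z:
  assumes "A \<ge> 1"
  shows "(\<lambda>x z. a + b * z) \<in> poly_space p A"
proof -
  have "(\<lambda>_. 0, 0) \<in> multi_indices p A" "(\<lambda>_. 0, 1) \<in> multi_indices p A"
    using assms unfolding multi_indices_def by auto
  from poly_space_add[OF this[THEN poly_space_monomial, THEN poly_space_cmult]]
  show ?thesis
    by simp
qed

lemma poly_space_fix_shift:
  assumes "A \<ge> 1" "f \<in> poly_space p A"
  shows "fix_shift f c \<in> poly_space p A"
proof -
  have "fix_shift f c = (\<lambda>x z. f x c + (c + (-1) * z))"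
    unfolding fix_shift_def by (simp add: fun_eq_iff)
  show ?thesis
    unfolding \<open>fix_shift f c = _\<close>
    by (rule poly_space_add[OF poly_space_fix_z[OF assms(2)] poly_space_affine_z[OF assms(1)]])
qed

lemma dnn_forward_cong_input_layer:
  assumes "affine_map (Ws' 0) (bs' 0) (wd 1) (wd 0) u' = affine_map (Ws 0) (bs 0) (wd 1) (wd 0) u"
    and "\<And>l. 0 < l \<Longrightarrow> l \<le> k \<Longrightarrow> Ws' l = Ws l \<and> bs' l = bs l"
  shows "dnn_forward \<sigma> wd Ws' bs' k u' = dnn_forward \<sigma> wd Ws bs k u"
  using assms(2) by (induction k) (simp_all add: assms(1)[unfolded One_nat_def])

lemma affine_map_fix_last_input:
  "affine_map (\<lambda>i j. if j = n then 0 else W i j) (\<lambda>i. b i + W i n * c) m (Suc n) u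
    = affine_map W b m (Suc n) (u(n := c))"
  by (simp add: affine_map_def fun_eq_iff sum.lessThan_Suc)

lemma affine_map_shift_output_bias:
  "0 < m \<Longrightarrow> affine_map W (b(0 := b 0 + d)) m n u 0 = affine_map W b m n u 0 + d"
  by (simp add: affine_map_def)

lemma linear_fix_shift_last:
  fixes a u :: "nat \<Rightarrow> 'a::comm_ring_1"
  shows "(\<Sum>k<Suc n. a k * (u(n := c)) k) + c - u n
    = (\<Sum>k<Suc n. (a(n := -1)) k * u k) + (a n * c + c)"
  by (simp add: sum.lessThan_Suc algebra_simps)

lemma concat_input_fix_last: "(concat_input p x z)(p := c) = concat_input p x c"
  by (simp add: concat_input_def fun_eq_iff)

lemma dnn_space_fix_shift:
  assumes "A \<ge> 1" "f \<in> dnn_space \<sigma> p A w"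
  shows "fix_shift f c \<in> dnn_space \<sigma> p A w"
proof -
  define wd where "wd = dnn_width p A w"
  obtain Waug Ws bs where f: "\<And>x z. f x z = (\<Sum>k<p + 1. Waug k * concat_input p x z k)
      + dnn_forward \<sigma> wd Ws bs A (concat_input p x z) 0"
    using assms(2) unfolding dnn_space_def wd_def by auto
  obtain m where A: "A = Suc m"
    using assms(1) by (cases A) auto
  define d where "d = Waug p * c + c"
  define Ws' where "Ws' = Ws(0 := \<lambda>i j. if j = p then 0 else Ws 0 i j)"
  define bs' where "bs' = bs(0 := \<lambda>i. bs 0 i + Ws 0 i p * c, A := (bs A)(0 := bs A 0 + d))"
  have hidden_layers: "dnn_forward \<sigma> wd Ws' bs' m (concat_input p x z)
      = dnn_forward \<sigma> wd Ws bs m (concat_input p x c)" for x z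
  proof (rule dnn_forward_cong_input_layer)
    show "affine_map (Ws' 0) (bs' 0) (wd 1) (wd 0) (concat_input p x z)
        = affine_map (Ws 0) (bs 0) (wd 1) (wd 0) (concat_input p x c)"
      using affine_map_fix_last_input[where n = p and W = "Ws 0" and b = "bs 0" and c = c]
      by (simp add: Ws'_def bs'_def A wd_def dnn_width_def concat_input_fix_last)
  qed (auto simp: Ws'_def bs'_def A)
  have "wd (Suc A) = 1" "Ws' (Suc m) = Ws (Suc m)" "bs' (Suc m) = (bs (Suc m))(0 := bs (Suc m) 0 + d)"
    by (simp_all add: wd_def dnn_width_def Ws'_def bs'_def A)
  then have output_layer: "dnn_forward \<sigma> wd Ws' bs' A (concat_input p x z) 0
      = dnn_forward \<sigma> wd Ws bs A (concat_input p x c) 0 + d" for x z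
    by (simp add: A hidden_layers affine_map_shift_output_bias)
  have augmentation: "(\<Sum>k<p + 1. Waug k * concat_input p x c k) + c - z
      = (\<Sum>k<p + 1. (Waug(p := -1)) k * concat_input p x z k) + d" for x z
    using linear_fix_shift_last[where a = Waug and n = p and u = "concat_input p x z" and c = c]
    by (simp add: concat_input_fix_last d_def) (simp add: concat_input_def)
  have "fix_shift f c x z = (\<Sum>k<p + 1. (Waug(p := -1)) k * concat_input p x z k)
      + dnn_forward \<sigma> wd Ws' bs' A (concat_input p x z) 0" for x z
    using augmentation[of x z] by (simp add: fix_shift_def f output_layer algebra_simps)
  then show ?thesis
    unfolding dnn_space_def wd_def by blast
qed

theorem lemma2:
  fixes p A :: nat and w :: "nat \<Rightarrow> nat" and \<sigma> :: "real \<Rightarrow> real"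
  assumes "A \<ge> 1" and "\<forall>i\<in>{1..A}. w i \<ge> 1"
  shows "(\<forall>f\<in>poly_space p A. \<forall>c. fix_shift f c \<in> poly_space p A)
       \<and> (\<forall>f\<in>dnn_space \<sigma> p A w. \<forall>c. fix_shift f c \<in> dnn_space \<sigma> p A w)"
  using poly_space_fix_shift dnn_space_fix_shift assms(1) by blast

end
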